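(* Let $b\ge2$ and $d\ge1$ be integers and $0<\alpha<1$ with $d<\tfrac1\alpha$. Then for every collection $\mathcal{G}=\{g_0,\dots,g_{d-1}\}$ of Lipschitz functions on $\mathbb{S}^1$, the Weierstrass embedding $\Phi^{\alpha,b}_{\mathcal{G}}\colon\mathbb{S}^1\to\mathbb{R}^d$ is not $\alpha$-bi-Hölder.
   Context: $\mathbb{S}^1$ is identified with $\mathbb{R}/\mathbb{Z}$, and functions on $\mathbb{S}^1$ are $1$-periodic functions on $\mathbb{R}$. For an integer $b\ge2$, $0<\alpha<1$ and a Lipschitz $g\colon\mathbb{S}^1\to\mathbb{R}$, $W_g^{\alpha,b}(x)=\sum_{k=0}^\infty b^{-\alpha k}g(b^kx)$. The Weierstrass embedding of $\mathcal{G}=\{g_0,\dots,g_{d-1}\}$ is $\Phi^{\alpha,b}_{\mathcal{G}}(x)=(W^{\alpha,b}_{g_0}(x),\dots,W^{\alpha,b}_{g_{d-1}}(x))$. A map $\Phi\colon\mathbb{S}^1\to\mathbb{R}^d$ is $\alpha$-bi-Hölder if there are $c_1,c_2>0$ with $c_1|x-y|^\alpha\le\|\Phi(x)-\Phi(y)\|\le c_2|x-y|^\alpha$ for all $x\ne y$ in $[0,1)$, where $\|\cdot\|$ is the $\ell^\infty$ norm. *)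

theory Defs
  imports "HOL-Analysis.Analysis"
begin

text \<open>Functions on the circle are 1-periodic functions on the reals.\<close>
definition periodic1 :: "(real \<Rightarrow> real) \<Rightarrow> bool" where
  "periodic1 g \<longleftrightarrow> (\<forall>x. g (x + 1) = g x)"

definition weierstrass :: "real \<Rightarrow> nat \<Rightarrow> (real \<Rightarrow> real) \<Rightarrow> real \<Rightarrow> real" where
  "weierstrass \<alpha> b g x = (\<Sum>k. real b powr (- \<alpha> * real k) * g (real b ^ k * x))"

definition weierstrass_embedding ::
    "real \<Rightarrow> nat \<Rightarrow> (nat \<Rightarrow> real \<Rightarrow> real) \<Rightarrow> nat \<Rightarrow> real \<Rightarrow> real" where
  "weierstrass_embedding \<alpha> b g i x = weierstrass \<alpha> b (g i) x"

definition linf_dist :: "nat \<Rightarrow> (nat \<Rightarrow> real \<Rightarrow> real) \<Rightarrow> real \<Rightarrow> real \<Rightarrow> real" where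
  "linf_dist d \<Phi> x y = Max ((\<lambda>i. \<bar>\<Phi> i x - \<Phi> i y\<bar>) ` {..<d})"

definition bi_holder :: "real \<Rightarrow> nat \<Rightarrow> (nat \<Rightarrow> real \<Rightarrow> real) \<Rightarrow> bool" where
  "bi_holder \<alpha> d \<Phi> \<longleftrightarrow> (\<exists>c1>0. \<exists>c2>0. \<forall>x\<in>{0..<1}. \<forall>y\<in>{0..<1}. x \<noteq> y \<longrightarrow>
      c1 * \<bar>x - y\<bar> powr \<alpha> \<le> linf_dist d \<Phi> x y \<and>
      linf_dist d \<Phi> x y \<le> c2 * \<bar>x - y\<bar> powr \<alpha>)"

end

theory Submission
  imports Defs
begin

text \<open>
  The \<open>N\<close>
  equally spaced points \<open>j / N\<close> of \<open>[0, 1)\<close> would have images in an \<open>\<ell>\<^sup>\<infinity>\<close>-ball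
  of radius \<open>c\<^sub>2\<close> that are pairwise \<open>c\<^sub>1 N\<^sup>-\<^sup>\<alpha>\<close>-separated.  Distinct such points
  lie in distinct cubes of a grid of mesh \<open>c\<^sub>1 N\<^sup>-\<^sup>\<alpha>\<close>, and only \<open>O(N\<^sup>d\<^sup>\<alpha>)\<close> cells
  meet the ball, so \<open>N = O(N\<^sup>d\<^sup>\<alpha>)\<close>, which is false for large \<open>N\<close> since \<open>d\<alpha> < 1\<close>.
\<close>

lemma card_int_lists_floor_le:
  fixes a :: real
  assumes "0 \<le> a"
  shows "real (card {xs. set xs \<subseteq> {\<lfloor>- a\<rfloor>..\<lfloor>a\<rfloor>} \<and> length xs = d}) \<le> (2 * a + 2) ^ d"
proof -
  have "\<lfloor>- a\<rfloor> \<le> \<lfloor>a\<rfloor>"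
    using assms by (intro floor_mono) simp
  then have "real (nat (\<lfloor>a\<rfloor> - \<lfloor>- a\<rfloor> + 1)) \<le> 2 * a + 2"
    by linarith
  then have "real (nat (\<lfloor>a\<rfloor> - \<lfloor>- a\<rfloor> + 1)) ^ d \<le> (2 * a + 2) ^ d"
    by (intro power_mono) simp_all
  then show ?thesis
    by (simp add: card_lists_length_eq)
qed

lemma card_linf_separated_le:
  fixes p :: "'a \<Rightarrow> nat \<Rightarrow> real" and z :: "nat \<Rightarrow> real"
  assumes "0 < \<delta>" and "0 \<le> R"
    and bounded: "\<And>j i. j \<in> J \<Longrightarrow> i < d \<Longrightarrow> \<bar>p j i - z i\<bar> \<le> R"
    and separated: "\<And>j k. j \<in> J \<Longrightarrow> k \<in> J \<Longrightarrow> j \<noteq> k \<Longrightarrow> \<exists>i<d. \<delta> \<le> \<bar>p j i - p k i\<bar>"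
  shows "real (card J) \<le> (2 * R / \<delta> + 2) ^ d"
proof -
  define cell where "cell j = map (\<lambda>i. \<lfloor>(p j i - z i) / \<delta>\<rfloor>) [0..<d]" for j
  define S where "S = {xs. set xs \<subseteq> {\<lfloor>- (R / \<delta>)\<rfloor>..\<lfloor>R / \<delta>\<rfloor>} \<and> length xs = d}"
  have "inj_on cell J"
  proof (rule inj_onI, rule ccontr)
    txt \<open>Points in the same cell of the \<open>\<delta>\<close>-grid are \<open>\<delta>\<close>-close in every coordinate.\<close>
    fix j k assume "j \<in> J" "k \<in> J" "cell j = cell k" "j \<noteq> k"
    then obtain i where "i < d" and far: "\<delta> \<le> \<bar>p j i - p k i\<bar>"
      using separated by blast
    then have "\<lfloor>(p j i - z i) / \<delta>\<rfloor> = \<lfloor>(p k i - z i) / \<delta>\<rfloor>"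
      using \<open>cell j = cell k\<close> unfolding cell_def map_eq_conv by simp
    then have "\<bar>(p j i - z i) / \<delta> - (p k i - z i) / \<delta>\<bar> < 1"
      by linarith
    then have "\<bar>p j i - p k i\<bar> < \<delta>"
      using \<open>0 < \<delta>\<close> by (simp add: field_simps flip: diff_divide_distrib)
    with far show False by simp
  qed
  moreover have "cell ` J \<subseteq> S"
  proof -
    have "\<lfloor>(p j i - z i) / \<delta>\<rfloor> \<in> {\<lfloor>- (R / \<delta>)\<rfloor>..\<lfloor>R / \<delta>\<rfloor>}" if "j \<in> J" "i < d" for j i
    proof -
      have "- R \<le> p j i - z i" "p j i - z i \<le> R"
        using bounded[OF that] by linarith+
      then have "- R / \<delta> \<le> (p j i - z i) / \<delta>" "(p j i - z i) / \<delta> \<le> R / \<delta>"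
        using \<open>0 < \<delta>\<close> by (metis divide_right_mono less_imp_le)+
      then show ?thesis by (simp add: floor_mono del: minus_divide_left)
    qed
    then show ?thesis unfolding cell_def S_def by auto
  qed
  moreover have "finite S"
    unfolding S_def by (simp add: finite_lists_length_eq)
  ultimately have "card J \<le> card S"
    by (rule card_inj_on_le)
  then have "real (card J) \<le> real (card S)"
    by simp
  also have "\<dots> \<le> (2 * (R / \<delta>) + 2) ^ d"
    unfolding S_def using assms(1,2) by (intro card_int_lists_floor_le) simp
  finally show ?thesis by simp
qed

lemma abs_component_le_linf_dist:
  assumes "i < d"
  shows "\<bar>\<Phi> i x - \<Phi> i y\<bar> \<le> linf_dist d \<Phi> x y"
  unfolding linf_dist_def using assms by (intro Max_ge) auto

lemma ex_component_eq_linf_dist: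
  assumes "1 \<le> d"
  shows "\<exists>i<d. linf_dist d \<Phi> x y = \<bar>\<Phi> i x - \<Phi> i y\<bar>"
proof -
  have "linf_dist d \<Phi> x y \<in> (\<lambda>i. \<bar>\<Phi> i x - \<Phi> i y\<bar>) ` {..<d}"
    unfolding linf_dist_def using assms by (intro Max_in) (auto simp: lessThan_empty_iff)
  then show ?thesis by auto
qed

lemma upper_holder_bounded:
  assumes upper: "\<forall>x\<in>{0..<1}. \<forall>y\<in>{0..<1}. x \<noteq> y \<longrightarrow> linf_dist d \<Phi> x y \<le> c * \<bar>x - y\<bar> powr \<alpha>"
    and "0 \<le> c" and "0 \<le> \<alpha>" and "i < d" and "x \<in> {0..<1}" and "y \<in> {0..<1}"
  shows "\<bar>\<Phi> i x - \<Phi> i y\<bar> \<le> c"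
proof (cases "x = y")
  case False
  have "\<bar>x - y\<bar> powr \<alpha> \<le> 1"
    using assms(3,5,6) by (intro powr_le1) auto
  have "\<bar>\<Phi> i x - \<Phi> i y\<bar> \<le> linf_dist d \<Phi> x y"
    using \<open>i < d\<close> by (rule abs_component_le_linf_dist)
  also have "\<dots> \<le> c * \<bar>x - y\<bar> powr \<alpha>"
    using upper assms(5,6) False by blast
  also have "\<dots> \<le> c"
    using \<open>0 \<le> c\<close> \<open>\<bar>x - y\<bar> powr \<alpha> \<le> 1\<close> by (simp add: mult_left_le)
  finally show ?thesis .
qed (use \<open>0 \<le> c\<close> in simp)

lemma lower_holder_separated:
  assumes lower: "\<forall>x\<in>{0..<1}. \<forall>y\<in>{0..<1}. x \<noteq> y \<longrightarrow> c * \<bar>x - y\<bar> powr \<alpha> \<le> linf_dist d \<Phi> x y"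
    and "1 \<le> d" and "0 \<le> c" and "0 \<le> \<alpha>" and "x \<in> {0..<1}" and "y \<in> {0..<1}"
    and "0 < r" and "r \<le> \<bar>x - y\<bar>"
  shows "\<exists>i<d. c * r powr \<alpha> \<le> \<bar>\<Phi> i x - \<Phi> i y\<bar>"
proof -
  obtain i where "i < d" and i: "linf_dist d \<Phi> x y = \<bar>\<Phi> i x - \<Phi> i y\<bar>"
    using ex_component_eq_linf_dist[OF \<open>1 \<le> d\<close>] by blast
  have "c * r powr \<alpha> \<le> c * \<bar>x - y\<bar> powr \<alpha>"
    using assms(3,4,7,8) by (intro mult_left_mono powr_mono2) auto
  also have "\<dots> \<le> linf_dist d \<Phi> x y"
    using lower assms(5-8) by auto
  finally show ?thesis
    using \<open>i < d\<close> i by auto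
qed

lemma holder_grid_card_le:
  assumes lower: "\<forall>x\<in>{0..<1}. \<forall>y\<in>{0..<1}. x \<noteq> y \<longrightarrow> c1 * \<bar>x - y\<bar> powr \<alpha> \<le> linf_dist d \<Phi> x y"
    and upper: "\<forall>x\<in>{0..<1}. \<forall>y\<in>{0..<1}. x \<noteq> y \<longrightarrow> linf_dist d \<Phi> x y \<le> c2 * \<bar>x - y\<bar> powr \<alpha>"
    and "1 \<le> d" and "0 < c1" and "0 < c2" and "0 < \<alpha>" and "1 \<le> N"
  shows "real N \<le> (2 * c2 / (c1 * (1 / real N) powr \<alpha>) + 2) ^ d"
proof -
  have N: "real N \<ge> 1" using \<open>1 \<le> N\<close> by simp
  have grid: "real j / real N \<in> {0..<1}" if "j < N" for j
    using that N by auto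
  have "real (card {..<N}) \<le> (2 * c2 / (c1 * (1 / real N) powr \<alpha>) + 2) ^ d"
  proof (rule card_linf_separated_le[where p = "\<lambda>j i. \<Phi> i (real j / real N)" and z = "\<lambda>i. \<Phi> i 0"])
    show "\<bar>\<Phi> i (real j / real N) - \<Phi> i 0\<bar> \<le> c2" if "j \<in> {..<N}" "i < d" for j i
      using upper_holder_bounded[OF upper] \<open>0 < c2\<close> \<open>0 < \<alpha>\<close> that grid by auto
    show "\<exists>i<d. c1 * (1 / real N) powr \<alpha> \<le> \<bar>\<Phi> i (real j / real N) - \<Phi> i (real k / real N)\<bar>"
      if "j \<in> {..<N}" "k \<in> {..<N}" "j \<noteq> k" for j k
    proof -
      have "1 \<le> \<bar>real j - real k\<bar>" using \<open>j \<noteq> k\<close> by linarith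
      then have "1 / real N \<le> \<bar>real j / real N - real k / real N\<bar>"
        using N by (simp add: divide_right_mono flip: diff_divide_distrib)
      then show ?thesis
        using that grid N \<open>0 < c1\<close> \<open>0 < \<alpha>\<close>
        by (intro lower_holder_separated[OF lower \<open>1 \<le> d\<close>]) auto
    qed
  qed (use \<open>0 < c1\<close> \<open>0 < c2\<close> N in auto)
  then show ?thesis by simp
qed

lemma bi_holder_grid_count_bound:
  assumes "bi_holder \<alpha> d \<Phi>" and "1 \<le> d" and "0 < \<alpha>"
  obtains C where "\<And>N. 1 \<le> N \<Longrightarrow> real N \<le> C * real N powr (real d * \<alpha>)"
proof -
  obtain c1 c2 where "0 < c1" and "0 < c2"
    and lower: "\<forall>x\<in>{0..<1}. \<forall>y\<in>{0..<1}. x \<noteq> y \<longrightarrow> c1 * \<bar>x - y\<bar> powr \<alpha> \<le> linf_dist d \<Phi> x y"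
    and upper: "\<forall>x\<in>{0..<1}. \<forall>y\<in>{0..<1}. x \<noteq> y \<longrightarrow> linf_dist d \<Phi> x y \<le> c2 * \<bar>x - y\<bar> powr \<alpha>"
    using assms(1) unfolding bi_holder_def by blast
  have "real N \<le> (2 * c2 / c1 + 2) ^ d * real N powr (real d * \<alpha>)" if "1 \<le> N" for N
  proof -
    have N: "real N \<ge> 1" using that by simp
    have "2 * c2 / (c1 * (1 / real N) powr \<alpha>) + 2 \<le> (2 * c2 / c1 + 2) * real N powr \<alpha>"
    proof -
      have "2 * c2 / (c1 * (1 / real N) powr \<alpha>) = 2 * c2 / c1 * real N powr \<alpha>"
        using N by (simp add: powr_divide)
      moreover have "1 \<le> real N powr \<alpha>"
        using N \<open>0 < \<alpha>\<close> by (intro ge_one_powr_ge_zero) auto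
      ultimately show ?thesis by (simp add: algebra_simps)
    qed
    then have "(2 * c2 / (c1 * (1 / real N) powr \<alpha>) + 2) ^ d \<le> ((2 * c2 / c1 + 2) * real N powr \<alpha>) ^ d"
      using \<open>0 < c1\<close> \<open>0 < c2\<close> N by (intro power_mono) auto
    also have "\<dots> = (2 * c2 / c1 + 2) ^ d * real N powr (real d * \<alpha>)"
      using N by (simp add: power_mult_distrib powr_realpow' powr_powr mult.commute flip: powr_realpow)
    finally show ?thesis
      using holder_grid_card_le[OF lower upper \<open>1 \<le> d\<close> \<open>0 < c1\<close> \<open>0 < c2\<close> \<open>0 < \<alpha>\<close> that] by linarith
  qed
  then show thesis by (rule that)
qed

lemma ex_nat_gt_mult_powr:
  fixes C a :: real
  assumes "a < 1"
  shows "\<exists>N::nat. 1 \<le> N \<and> C * real N powr a < real N"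
proof -
  define e where "e = 1 - a"
  define B where "B = max C 1"
  have "e > 0" and "B > 0" and "C \<le> B"
    using assms unfolding e_def B_def by auto
  define N where "N = nat \<lceil>B powr (1 / e)\<rceil> + 1"
  have "1 \<le> N" unfolding N_def by simp
  have "B powr (1 / e) < real N"
    unfolding N_def by linarith
  then have "(B powr (1 / e)) powr e < real N powr e"
    using \<open>e > 0\<close> by (intro powr_less_mono2) auto
  then have "C < real N powr e"
    using \<open>e > 0\<close> \<open>B > 0\<close> \<open>C \<le> B\<close> by (simp add: powr_powr)
  then have "C * real N powr a < real N powr e * real N powr a"
    using \<open>1 \<le> N\<close> by simp
  also have "\<dots> = real N"
    using \<open>1 \<le> N\<close> by (simp add: e_def flip: powr_add)
  finally show ?thesis using \<open>1 \<le> N\<close> by auto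
qed

theorem proposition2p2:
  fixes b d :: nat and \<alpha> :: real and g :: "nat \<Rightarrow> real \<Rightarrow> real"
  assumes "b \<ge> 2" and "d \<ge> 1" and "0 < \<alpha>" and "\<alpha> < 1" and "real d < 1 / \<alpha>"
    and "\<forall>i<d. periodic1 (g i) \<and> (\<exists>C. C-lipschitz_on UNIV (g i))"
  shows "\<not> bi_holder \<alpha> d (weierstrass_embedding \<alpha> b g)"
proof
  assume "bi_holder \<alpha> d (weierstrass_embedding \<alpha> b g)"
  then obtain C where C: "\<And>N. 1 \<le> N \<Longrightarrow> real N \<le> C * real N powr (real d * \<alpha>)"
    using bi_holder_grid_count_bound assms(2,3) by blast
  have "real d * \<alpha> < 1"
    using assms(3,5) by (simp add: field_simps)
  then obtain N :: nat where "1 \<le> N" and "C * real N powr (real d * \<alpha>) < real N"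
    using ex_nat_gt_mult_powr by blast
  with C show False by fastforce
qed

end
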